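(* Let $S$ be an infinite set and $\mathcal{F}\subseteq 2^S$ countable, nontrivial, and closed under finite unions and finite intersections. Let $A,C\subseteq S$ with $A$ infinite, $C$ infinite, $S\setminus C$ infinite, $A\cap C=\emptyset$, and $A\notin\mathit{cclass}_1(C,\mathcal{F})$. Then there exists $B\subseteq A$ with $B\in\mathit{ccore}_1(C,\mathcal{F})$.
   Context: $\mathcal{F}$ is nontrivial if $\emptyset,S\in\mathcal{F}$ and for all $Q\in\mathcal{F}$ and finite $E\subseteq S$ both $Q\cup E\in\mathcal{F}$ and $Q\setminus E\in\mathcal{F}$. For $C\subseteq S$ and an infinite $A\subseteq S\setminus C$: $A\in\mathit{cclass}_1(C,\mathcal{F})$ iff there is $Q\in\mathcal{F}$ with $S\setminus Q\in\mathcal{F}$, $C\subseteq Q$ and $A\subseteq S\setminus Q$; $B\in\mathit{ccore}_1(C,\mathcal{F})$ iff $B$ is an infinite subset of $S\setminus C$ and every infinite $B'\subseteq B$ satisfies $B'\notin\mathit{cclass}_1(C,\mathcal{F})$. *)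

theory Defs
  imports Main "HOL-Library.Countable_Set"
begin

definition nontrivial :: "'a set \<Rightarrow> 'a set set \<Rightarrow> bool" where
  "nontrivial S F \<longleftrightarrow> {} \<in> F \<and> S \<in> F \<and>
     (\<forall>Q\<in>F. \<forall>E. finite E \<and> E \<subseteq> S \<longrightarrow> Q \<union> E \<in> F \<and> Q - E \<in> F)"

definition cclass1 :: "'a set \<Rightarrow> 'a set \<Rightarrow> 'a set set \<Rightarrow> 'a set set" where
  "cclass1 S C F = {A. A \<subseteq> S - C \<and> infinite A \<and>
     (\<exists>Q\<in>F. S - Q \<in> F \<and> C \<subseteq> Q \<and> A \<subseteq> S - Q)}"

definition ccore1 :: "'a set \<Rightarrow> 'a set \<Rightarrow> 'a set set \<Rightarrow> 'a set set" where
  "ccore1 S C F = {B. B \<subseteq> S - C \<and> infinite B \<and>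
     (\<forall>B'. B' \<subseteq> B \<and> infinite B' \<longrightarrow> B' \<notin> cclass1 S C F)}"

end

theory Submission
  imports Defs
begin

text \<open>The sets in \<open>separating S C F\<close> are the Q of \<open>cclass1\<close>: the members of F containing C whose
  complement in S also lies in F. They form a countable family closed under intersection, and
  A meets each of them in an infinite set. A sequence of decreasing intersections is cofinal in
  this family, and an infinite pseudo-intersection B \<subseteq> A of it is almost contained in every
  separating set, so no infinite subset of B lies outside one of them.\<close>

definition separating :: "'a set \<Rightarrow> 'a set \<Rightarrow> 'a set set \<Rightarrow> 'a set set" where
  "separating S C F = {Q \<in> F. S - Q \<in> F \<and> C \<subseteq> Q}"

lemma cclass1_iff_disjoint_separating:
  "A \<in> cclass1 S C F \<longleftrightarrow>
     A \<subseteq> S - C \<and> infinite A \<and> (\<exists>Q \<in> separating S C F. A \<inter> Q = {})"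
  unfolding cclass1_def separating_def by blast

lemma separating_Int:
  assumes "\<And>X Y. X \<in> F \<Longrightarrow> Y \<in> F \<Longrightarrow> X \<union> Y \<in> F"
    and "\<And>X Y. X \<in> F \<Longrightarrow> Y \<in> F \<Longrightarrow> X \<inter> Y \<in> F"
    and "Q \<in> separating S C F" "Q' \<in> separating S C F"
  shows "Q \<inter> Q' \<in> separating S C F"
proof -
  have "S - (Q \<inter> Q') = (S - Q) \<union> (S - Q')" by blast
  then show ?thesis using assms by (auto simp: separating_def)
qed

text \<open>A finite trace of A on a separating set could be cut out, leaving a separating set
  disjoint from A.\<close>

lemma infinite_Int_separating:
  assumes "nontrivial S F" "A \<subseteq> S - C" "infinite A" "A \<notin> cclass1 S C F"
    and Q: "Q \<in> separating S C F"
  shows "infinite (A \<inter> Q)"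
proof
  assume fin: "finite (A \<inter> Q)"
  have "A \<inter> Q \<subseteq> S" using assms(2) by blast
  with fin Q \<open>nontrivial S F\<close> have "Q - A \<inter> Q \<in> F" "(S - Q) \<union> A \<inter> Q \<in> F"
    by (auto simp: nontrivial_def separating_def)
  moreover have "S - (Q - A \<inter> Q) = (S - Q) \<union> A \<inter> Q" using assms(2) by blast
  ultimately have "Q - A \<inter> Q \<in> separating S C F" using Q assms(2) by (auto simp: separating_def)
  then show False using assms(2-4) by (auto simp: cclass1_iff_disjoint_separating)
qed

lemma countable_Int_closed_antimono_cofinal:
  assumes "countable D" "D \<noteq> {}" "\<And>X Y. X \<in> D \<Longrightarrow> Y \<in> D \<Longrightarrow> X \<inter> Y \<in> D"
  obtains P :: "nat \<Rightarrow> 'a set"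
  where "antimono P" "\<And>n. P n \<in> D" "\<And>Q. Q \<in> D \<Longrightarrow> \<exists>k. P k \<subseteq> Q"
proof
  define Q where "Q = from_nat_into D"
  have range_Q: "range Q = D" using assms(1,2) by (simp add: Q_def)
  define P where "P n = \<Inter> (Q ` {..n})" for n
  show "antimono P" by (auto intro!: antimonoI simp: P_def)
  show "P n \<in> D" for n
  proof (induction n)
    case 0
    then show ?case using range_Q by (auto simp: P_def)
  next
    case (Suc n)
    have "P (Suc n) = Q (Suc n) \<inter> P n" by (auto simp: P_def atMost_Suc)
    then show ?case using assms(3) Suc range_Q by auto
  qed
  show "\<exists>k. P k \<subseteq> Q'" if "Q' \<in> D" for Q'
    using that range_Q by (auto simp: P_def)
qed

text \<open>We build finite sets \<open>X 0 \<subset> X 1 \<subset> \<dots>\<close> with \<open>card (X n) = n\<close>, the new point of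
  \<open>X (Suc n)\<close> taken from \<open>T n\<close>; their union is the pseudo-intersection.\<close>

lemma antimono_infinite_pseudo_intersection:
  fixes T :: "nat \<Rightarrow> 'a set"
  assumes "antimono T" "\<And>n. infinite (T n)"
  obtains B where "B \<subseteq> T 0" "infinite B" "\<And>k. finite (B - T k)"
proof -
  let ?step = "\<lambda>n X Y. \<exists>y \<in> T n - X. Y = insert y X"
  have extend: "\<exists>Y. (finite Y \<and> card Y = Suc n) \<and> ?step n X Y" if X: "finite X \<and> card X = n" for n X
  proof -
    have "infinite (T n - X)" using assms(2) X by simp
    then obtain y where "y \<in> T n - X" using infinite_imp_nonempty by blast
    then show ?thesis using X by (intro exI[of _ "insert y X"]) auto
  qed
  have "\<exists>X. \<forall>n. (finite (X n) \<and> card (X n) = n) \<and> ?step n (X n) (X (Suc n))"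
    by (rule dependent_nat_choice) (use extend in auto)
  then obtain X where X: "\<And>n. finite (X n) \<and> card (X n) = n" "\<And>n. ?step n (X n) (X (Suc n))"
    by blast
  have X0: "X 0 = {}" using X(1)[of 0] by auto
  have X_mono: "X n \<subseteq> X (Suc n)" for n using X(2)[of n] by auto
  have XT: "X n \<subseteq> T 0" for n
  proof (induction n)
    case (Suc n)
    have "T n \<subseteq> T 0" using assms(1) by (simp add: antimono_def)
    with Suc X(2)[of n] show ?case by auto
  qed (simp add: X0)
  have almost: "X (k + m) - T k \<subseteq> X k" for k m
  proof (induction m)
    case (Suc m)
    have "T (k + m) \<subseteq> T k" using assms(1) by (simp add: antimono_def)
    with Suc X(2)[of "k + m"] show ?case by auto
  qed simp
  define B where "B = (\<Union>n. X n)"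
  show thesis
  proof
    show "B \<subseteq> T 0" using XT by (auto simp: B_def)
    show "infinite B"
    proof
      assume "finite B"
      moreover have "X (Suc (card B)) \<subseteq> B" by (auto simp: B_def)
      ultimately have "card (X (Suc (card B))) \<le> card B" by (rule card_mono)
      then show False using X(1) by simp
    qed
    show "finite (B - T k)" for k
    proof (rule finite_subset)
      show "B - T k \<subseteq> X k"
      proof
        fix x assume x: "x \<in> B - T k"
        then obtain n where "x \<in> X n" by (auto simp: B_def)
        then show "x \<in> X k"
        proof (cases "k \<le> n")
          case True
          then show ?thesis using almost[of k "n - k"] x \<open>x \<in> X n\<close> by auto
        next
          case False
          then have "X n \<subseteq> X k" using lift_Suc_mono_le[of X, OF X_mono] by simp
          then show ?thesis using \<open>x \<in> X n\<close> by blast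
        qed
      qed
    qed (use X(1) in simp)
  qed
qed

theorem lemma4p5:
  fixes S :: "'a set" and F :: "'a set set" and A C :: "'a set"
  assumes "infinite S"
    and "F \<subseteq> Pow S"
    and "countable F"
    and "nontrivial S F"
    and "\<And>X Y. X \<in> F \<Longrightarrow> Y \<in> F \<Longrightarrow> X \<union> Y \<in> F"
    and "\<And>X Y. X \<in> F \<Longrightarrow> Y \<in> F \<Longrightarrow> X \<inter> Y \<in> F"
    and "A \<subseteq> S" and "C \<subseteq> S"
    and "infinite A" and "infinite C" and "infinite (S - C)"
    and "A \<inter> C = {}"
    and "A \<notin> cclass1 S C F"
  shows "\<exists>B. B \<subseteq> A \<and> B \<in> ccore1 S C F"
proof -
  have A: "A \<subseteq> S - C" using assms(7,12) by blast
  have "S \<in> separating S C F" using assms(4,8) by (simp add: nontrivial_def separating_def)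
  moreover have "countable (separating S C F)" using assms(3) by (simp add: separating_def)
  ultimately obtain P :: "nat \<Rightarrow> 'a set" where P: "antimono P" "\<And>n. P n \<in> separating S C F"
      "\<And>Q. Q \<in> separating S C F \<Longrightarrow> \<exists>k. P k \<subseteq> Q"
    using countable_Int_closed_antimono_cofinal separating_Int[OF assms(5,6)] by (metis empty_iff)
  have "antimono (\<lambda>n. A \<inter> P n)" using P(1) by (auto simp: antimono_def)
  moreover have "infinite (A \<inter> P n)" for n
    using infinite_Int_separating[OF assms(4) A assms(9,13) P(2)] .
  ultimately obtain B where B: "B \<subseteq> A" "infinite B" "\<And>k. finite (B - A \<inter> P k)"
    by (rule antimono_infinite_pseudo_intersection) auto
  have "B' \<notin> cclass1 S C F" if "B' \<subseteq> B" "infinite B'" for B'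
  proof
    assume "B' \<in> cclass1 S C F"
    then obtain Q where Q: "Q \<in> separating S C F" "B' \<inter> Q = {}"
      by (auto simp: cclass1_iff_disjoint_separating)
    then obtain k where "P k \<subseteq> Q" using P(3) by blast
    then have "B' \<subseteq> B - A \<inter> P k" using Q(2) that(1) by blast
    then show False using B(3)[of k] that(2) by (auto dest: finite_subset)
  qed
  then have "B \<in> ccore1 S C F" using A B(1,2) by (auto simp: ccore1_def)
  then show ?thesis using B(1) by blast
qed

end
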